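(* Let $S_X,S_Y$ be finite nonempty action sets and $\varphi:S_X\times S_Y\to\mathbb{R}$, and suppose $\Phi_X^+\neq\emptyset$ and $\Phi_X^-\neq\emptyset$. Then there exist a set $\mathcal{M}_X\subseteq\Delta(S_X)$, a two-point response function $\sigma_X^*:\mathcal{M}_X\times S_Y\to\mathcal{M}_X$, and a function $\Psi:\mathcal{M}_X\to\mathbb{R}$ such that $$\varphi(\tau_X,s_Y)=\Psi(\tau_X)-\Psi(\sigma_X^*[\tau_X,s_Y])$$ for all $\tau_X\in\mathcal{M}_X$ and $s_Y\in S_Y$.
   Context: $\Delta(S)$ denotes the probability distributions on $S$; $\varphi(\tau_X,s_Y)=\mathbb{E}_{s_X\sim\tau_X}[\varphi(s_X,s_Y)]$. $\Phi_X^+=\{\tau_X\in\Delta(S_X):\min_{s_Y\in S_Y}\varphi(\tau_X,s_Y)\ge0\}$ and $\Phi_X^-=\{\tau_X\in\Delta(S_X):\max_{s_Y\in S_Y}\varphi(\tau_X,s_Y)\le0\}$. A response function $\sigma_X^*:\mathcal{M}_X\times S_Y\to\mathcal{M}_X$ is two-point if there exist $\tau_X^+,\tau_X^-\in\Delta(S_X)$ and $p^*:[0,1]\times S_Y\to[0,1]$ such that $\mathcal{M}_X\subseteq\{p\tau_X^++(1-p)\tau_X^-:p\in[0,1]\}$ and $\sigma_X^*[p\tau_X^++(1-p)\tau_X^-,s_Y]=p^*[p,s_Y]\tau_X^++(1-p^*[p,s_Y])\tau_X^-$. *)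

theory Defs
  imports Main Complex_Main
begin

text \<open>Action sets S_X, S_Y are modelled as finite (hence nonempty) types.
  A mixed strategy is a function to the reals; Delta(S) is the probability simplex.\<close>

definition simplex :: "('a::finite \<Rightarrow> real) set" where
  "simplex = {\<tau>. (\<forall>x. 0 \<le> \<tau> x) \<and> (\<Sum>x\<in>UNIV. \<tau> x) = 1}"

definition mixed_payoff :: "('x::finite \<Rightarrow> 'y \<Rightarrow> real) \<Rightarrow> ('x \<Rightarrow> real) \<Rightarrow> 'y \<Rightarrow> real" where
  "mixed_payoff \<phi> \<tau> y = (\<Sum>x\<in>UNIV. \<tau> x * \<phi> x y)"

definition Phi_plus :: "('x::finite \<Rightarrow> 'y::finite \<Rightarrow> real) \<Rightarrow> ('x \<Rightarrow> real) set" where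
  "Phi_plus \<phi> = {\<tau> \<in> simplex. Min (range (mixed_payoff \<phi> \<tau>)) \<ge> 0}"

definition Phi_minus :: "('x::finite \<Rightarrow> 'y::finite \<Rightarrow> real) \<Rightarrow> ('x \<Rightarrow> real) set" where
  "Phi_minus \<phi> = {\<tau> \<in> simplex. Max (range (mixed_payoff \<phi> \<tau>)) \<le> 0}"

definition mix :: "real \<Rightarrow> ('x \<Rightarrow> real) \<Rightarrow> ('x \<Rightarrow> real) \<Rightarrow> ('x \<Rightarrow> real)" where
  "mix p \<tau>p \<tau>m = (\<lambda>x. p * \<tau>p x + (1 - p) * \<tau>m x)"

text \<open>Two-point response function on M (sigma is only meaningful on M x S_Y).\<close>
definition two_point ::
  "('x::finite \<Rightarrow> real) set \<Rightarrow> (('x \<Rightarrow> real) \<Rightarrow> 'y \<Rightarrow> ('x \<Rightarrow> real)) \<Rightarrow> bool" where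
  "two_point M \<sigma> \<longleftrightarrow>
     (\<exists>\<tau>p \<in> simplex. \<exists>\<tau>m \<in> simplex. \<exists>pstar :: real \<Rightarrow> 'y \<Rightarrow> real.
        (\<forall>p\<in>{0..1}. \<forall>y. pstar p y \<in> {0..1}) \<and>
        M \<subseteq> {mix p \<tau>p \<tau>m | p. p \<in> {0..1}} \<and>
        (\<forall>p\<in>{0..1}. \<forall>y. mix p \<tau>p \<tau>m \<in> M \<longrightarrow>
            \<sigma> (mix p \<tau>p \<tau>m) y = mix (pstar p y) \<tau>p \<tau>m))"

end

theory Submission
  imports Defs
begin

text \<open>Take \<open>\<tau>\<^sup>+ \<in> \<Phi>\<^sub>X\<^sup>+\<close>, \<open>\<tau>\<^sup>- \<in> \<Phi>\<^sub>X\<^sup>-\<close> and let \<open>\<M>\<^sub>X\<close> be the segment between them, the point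
  \<open>\<tau>\<^sub>p\<close> having weight \<open>p\<close> on \<open>\<tau>\<^sup>+\<close>. With \<open>\<Psi>(\<tau>\<^sub>p) = C p\<close> the required identity forces the response
  \<open>p\<^sup>*[p, s\<^sub>Y] = p - \<phi>(\<tau>\<^sub>p, s\<^sub>Y) / C\<close>. By linearity of \<open>\<phi>\<close> in \<open>\<tau>\<close>,
  \<open>C p\<^sup>* = p (C - \<phi>(\<tau>\<^sup>+, s\<^sub>Y)) + (1 - p) (-\<phi>(\<tau>\<^sup>-, s\<^sub>Y))\<close> is a convex combination of two numbers in
  \<open>[0, C]\<close> as soon as \<open>C\<close> bounds \<open>\<phi>(\<tau>\<^sup>+, \<cdot>) \<ge> 0\<close> and \<open>-\<phi>(\<tau>\<^sup>-, \<cdot>) \<ge> 0\<close>, so \<open>p\<^sup>* \<in> [0, 1]\<close>.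
  If \<open>\<tau>\<^sup>+ = \<tau>\<^sup>-\<close>, then \<open>\<phi>\<close> vanishes there and the segment degenerates to a rest point.\<close>

lemma mixed_payoff_mix:
  "mixed_payoff \<phi> (mix p \<tau> \<tau>') y = p * mixed_payoff \<phi> \<tau> y + (1 - p) * mixed_payoff \<phi> \<tau>' y"
  unfolding mixed_payoff_def mix_def
  by (simp add: distrib_right sum.distrib sum_distrib_left mult.assoc)

lemma mix_same [simp]: "mix p \<tau> \<tau> = \<tau>"
  unfolding mix_def by (simp add: algebra_simps)

lemma mix_in_simplex:
  assumes "\<tau> \<in> simplex" "\<tau>' \<in> simplex" "p \<in> {0..1}"
  shows "mix p \<tau> \<tau>' \<in> simplex"
  using assms unfolding simplex_def mix_def
  by (auto simp: sum.distrib simp flip: sum_distrib_left)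

lemma inj_mix:
  assumes "\<tau> \<noteq> \<tau>'"
  shows "inj (\<lambda>p. mix p \<tau> \<tau>')"
proof (rule injI)
  fix p q assume "mix p \<tau> \<tau>' = mix q \<tau> \<tau>'"
  moreover obtain x where "\<tau> x \<noteq> \<tau>' x" using assms by auto
  ultimately have "(p - q) * (\<tau> x - \<tau>' x) = 0"
    unfolding mix_def by (drule_tac x = x in fun_cong) (simp add: algebra_simps)
  with \<open>\<tau> x \<noteq> \<tau>' x\<close> show "p = q" by simp
qed

lemma Phi_plus_payoff_nonneg:
  fixes \<phi> :: "'x::finite \<Rightarrow> 'y::finite \<Rightarrow> real"
  assumes "\<tau> \<in> Phi_plus \<phi>"
  shows "0 \<le> mixed_payoff \<phi> \<tau> y"
proof -
  have "Min (range (mixed_payoff \<phi> \<tau>)) \<le> mixed_payoff \<phi> \<tau> y" by (rule Min_le) auto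
  with assms show ?thesis unfolding Phi_plus_def by simp
qed

lemma Phi_minus_payoff_nonpos:
  fixes \<phi> :: "'x::finite \<Rightarrow> 'y::finite \<Rightarrow> real"
  assumes "\<tau> \<in> Phi_minus \<phi>"
  shows "mixed_payoff \<phi> \<tau> y \<le> 0"
proof -
  have "mixed_payoff \<phi> \<tau> y \<le> Max (range (mixed_payoff \<phi> \<tau>))" by (rule Max_ge) auto
  with assms show ?thesis unfolding Phi_minus_def by simp
qed

lemma finite_type_positive_upper_bound:
  fixes f :: "'a::finite \<Rightarrow> real"
  obtains C where "C > 0" "\<And>y. f y \<le> C"
proof
  show "1 + (\<Sum>y\<in>UNIV. \<bar>f y\<bar>) > 0" by (simp add: add_pos_nonneg sum_nonneg)
  show "f y \<le> 1 + (\<Sum>y\<in>UNIV. \<bar>f y\<bar>)" for y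
    using member_le_sum[of y UNIV "\<lambda>y. \<bar>f y\<bar>"] by simp
qed

definition two_point_potential ::
  "('x::finite \<Rightarrow> 'y \<Rightarrow> real) \<Rightarrow> ('x \<Rightarrow> real) set \<Rightarrow> (('x \<Rightarrow> real) \<Rightarrow> 'y \<Rightarrow> ('x \<Rightarrow> real))
    \<Rightarrow> (('x \<Rightarrow> real) \<Rightarrow> real) \<Rightarrow> bool" where
  "two_point_potential \<phi> M \<sigma> \<Psi> \<longleftrightarrow>
     M \<subseteq> simplex \<and> M \<noteq> {} \<and> (\<forall>\<tau>\<in>M. \<forall>y. \<sigma> \<tau> y \<in> M) \<and> two_point M \<sigma> \<and>
     (\<forall>\<tau>\<in>M. \<forall>y. mixed_payoff \<phi> \<tau> y = \<Psi> \<tau> - \<Psi> (\<sigma> \<tau> y))"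

lemma two_point_potential_rest_point:
  assumes "\<tau> \<in> simplex" "\<And>y. mixed_payoff \<phi> \<tau> y = 0"
  shows "two_point_potential \<phi> {\<tau>} (\<lambda>_ _. \<tau>) (\<lambda>_. 0)"
proof -
  have "two_point {\<tau>} (\<lambda>_ _. \<tau>)"
    unfolding two_point_def
    using assms(1) by (intro bexI exI[of _ "\<lambda>_ _. 1"]) (auto intro: exI[of _ 1])
  with assms show ?thesis unfolding two_point_potential_def by simp
qed

lemma two_point_potential_segment:
  fixes \<phi> :: "'x::finite \<Rightarrow> 'y \<Rightarrow> real"
  assumes simplex: "\<tau>p \<in> simplex" "\<tau>m \<in> simplex" and distinct: "\<tau>p \<noteq> \<tau>m"
    and plus: "\<And>y. 0 \<le> mixed_payoff \<phi> \<tau>p y" "\<And>y. mixed_payoff \<phi> \<tau>p y \<le> C"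
    and minus: "\<And>y. mixed_payoff \<phi> \<tau>m y \<le> 0" "\<And>y. - mixed_payoff \<phi> \<tau>m y \<le> C"
    and "C > 0"
  defines "P \<equiv> inv (\<lambda>p. mix p \<tau>p \<tau>m)"
    and "pstar p y \<equiv> p - mixed_payoff \<phi> (mix p \<tau>p \<tau>m) y / C"
  shows "two_point_potential \<phi> {mix p \<tau>p \<tau>m | p. p \<in> {0..1}}
           (\<lambda>\<tau> y. mix (pstar (P \<tau>) y) \<tau>p \<tau>m) (\<lambda>\<tau>. C * P \<tau>)"
proof -
  have P_mix [simp]: "P (mix p \<tau>p \<tau>m) = p" for p
    unfolding P_def using inj_mix[OF distinct] by (rule inv_f_f)
  have scaled_pstar: "C * pstar p y = C * p - mixed_payoff \<phi> (mix p \<tau>p \<tau>m) y" for p y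
    unfolding pstar_def using \<open>C > 0\<close> by (simp add: right_diff_distrib)
  have pstar_unit: "pstar p y \<in> {0..1}" if "p \<in> {0..1}" for p y
  proof -
    let ?a = "mixed_payoff \<phi> \<tau>p y" and ?b = "mixed_payoff \<phi> \<tau>m y"
    have "C * pstar p y = p * (C - ?a) + (1 - p) * (- ?b)"
      unfolding scaled_pstar mixed_payoff_mix by (simp add: algebra_simps)
    moreover have "0 \<le> p * (C - ?a) + (1 - p) * (- ?b)"
      using that plus minus by (intro add_nonneg_nonneg mult_nonneg_nonneg) auto
    moreover have "p * (C - ?a) + (1 - p) * (- ?b) \<le> C"
      using that plus minus by (intro convex_bound_le) auto
    ultimately have "0 \<le> C * pstar p y" "C * pstar p y \<le> C * 1" by simp_all
    with \<open>C > 0\<close> show ?thesis by (simp add: zero_le_mult_iff mult_le_cancel_left_pos)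
  qed
  have "two_point {mix p \<tau>p \<tau>m | p. p \<in> {0..1}} (\<lambda>\<tau> y. mix (pstar (P \<tau>) y) \<tau>p \<tau>m)"
    unfolding two_point_def using pstar_unit
    by (intro bexI[OF _ simplex(1)] bexI[OF _ simplex(2)] exI[of _ pstar]) auto
  then show ?thesis
    unfolding two_point_potential_def using simplex pstar_unit scaled_pstar
    by (auto intro: mix_in_simplex)
qed

theorem lemma5:
  fixes \<phi> :: "'x::finite \<Rightarrow> 'y::finite \<Rightarrow> real"
  assumes "Phi_plus \<phi> \<noteq> {}" and "Phi_minus \<phi> \<noteq> {}"
  shows "\<exists>M \<sigma> (\<Psi> :: ('x \<Rightarrow> real) \<Rightarrow> real).
           M \<subseteq> simplex \<and> M \<noteq> {} \<and>
           (\<forall>\<tau>\<in>M. \<forall>y. \<sigma> \<tau> y \<in> M) \<and>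
           two_point M \<sigma> \<and>
           (\<forall>\<tau>\<in>M. \<forall>y. mixed_payoff \<phi> \<tau> y = \<Psi> \<tau> - \<Psi> (\<sigma> \<tau> y))"
proof -
  obtain \<tau>p \<tau>m where plus: "\<tau>p \<in> Phi_plus \<phi>" and minus: "\<tau>m \<in> Phi_minus \<phi>"
    using assms by blast
  have simplex: "\<tau>p \<in> simplex" "\<tau>m \<in> simplex"
    using plus minus unfolding Phi_plus_def Phi_minus_def by simp_all
  note payoff_bounds = Phi_plus_payoff_nonneg[OF plus] Phi_minus_payoff_nonpos[OF minus]
  have "\<exists>M \<sigma> \<Psi>. two_point_potential \<phi> M \<sigma> \<Psi>"
  proof (cases "\<tau>p = \<tau>m")
    case True
    then have "mixed_payoff \<phi> \<tau>p y = 0" for y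
      using payoff_bounds[of y] by simp
    then show ?thesis using two_point_potential_rest_point[OF simplex(1)] by blast
  next
    case False
    obtain C where "C > 0"
      and C: "\<And>y. \<bar>mixed_payoff \<phi> \<tau>p y\<bar> + \<bar>mixed_payoff \<phi> \<tau>m y\<bar> \<le> C"
      using finite_type_positive_upper_bound
          [of "\<lambda>y. \<bar>mixed_payoff \<phi> \<tau>p y\<bar> + \<bar>mixed_payoff \<phi> \<tau>m y\<bar>"] by blast
    have "mixed_payoff \<phi> \<tau>p y \<le> C" "- mixed_payoff \<phi> \<tau>m y \<le> C" for y
      using C[of y] by linarith+
    then show ?thesis
      using two_point_potential_segment[OF simplex False] payoff_bounds \<open>C > 0\<close> by blast
  qed
  then show ?thesis unfolding two_point_potential_def by blast
qed

end
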